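(* Suppose the nontrivial move problem has been solved: each agent $a$ holds a direction $\mathrm{dir}_a\in\{\text{right},\text{left}\}$ such that the round in which every agent starts in direction $\mathrm{dir}_a$ is a nontrivial move. Then the leader election problem can be solved in $O(\log N)$ further rounds.
   Context: Model: $n>4$ agents are at distinct, arbitrary initial positions on a circle of circumference $1$ and act in synchronised unit-time rounds. Each agent has its own notion of right (clockwise) and left; these need not be consistent across agents. At the start of a round each agent chooses a direction and moves at unit speed. Agents never pass: colliding moving agents instantly reverse direction. There is no communication. At the end of each round an agent learns the clockwise distance, in its own orientation, from its start-of-round to its end-of-round position. Agents have distinct IDs in $\{1,\dots,N\}$ with $N\ge n$ known. Rotation index: if $n_C$ agents start clockwise and $n_A$ anticlockwise (objective orientation), each agent moves to the initial position of the agent $(n_C-n_A)\bmod n$ places clockwise; this is the rotation index. A nontrivial move is a round whose rotation index is not in $\{0,n/2\}$. Leader election is solved when exactly one agent has status "leader" and all others have status "non-leader". *)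

theory Defs
  imports Complex_Main
begin

text \<open>Agents are indexed 0..n-1 in objective clockwise order; agent i initially sits at
  coordinate p i in [0,1) (clockwise = increasing coordinate mod 1).
  ori i = True iff agent i's notion of right coincides with objective clockwise.
  An algorithm is a pair (move, decide): move N ident d hist = True means the agent
  starts the round moving right (in its own orientation); it depends only on the known bound N,
  the agent's ID, its given direction d (True = right, own orientation) and its own history of
  observations. decide N ident d hist = True means status leader.\<close>

definition cwd :: "real \<Rightarrow> real \<Rightarrow> real" where
  "cwd x y = frac (y - x)"

text \<open>Rotation index of a round in which agent i moves objectively clockwise iff cw i.\<close>
definition rot_index :: "nat \<Rightarrow> (nat \<Rightarrow> bool) \<Rightarrow> nat" where
  "rot_index n cw =
     nat ((int (card {i. i < n \<and> cw i}) - int (card {i. i < n \<and> \<not> cw i})) mod int n)"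

definition nontrivial :: "nat \<Rightarrow> (nat \<Rightarrow> bool) \<Rightarrow> bool" where
  "nontrivial n cw \<longleftrightarrow> rot_index n cw \<noteq> 0 \<and> 2 * rot_index n cw \<noteq> n"

text \<open>State after t rounds: (R, hist). Since every round permutes the set of positions by a
  rotation, after t rounds agent i sits at p ((i + R) mod n); hist i is the list of observations
  (clockwise distances in the agent's own orientation) of agent i, one per round.\<close>
fun run :: "(nat \<Rightarrow> nat \<Rightarrow> bool \<Rightarrow> real list \<Rightarrow> bool) \<Rightarrow> nat \<Rightarrow> nat \<Rightarrow> (nat \<Rightarrow> real)
    \<Rightarrow> (nat \<Rightarrow> bool) \<Rightarrow> (nat \<Rightarrow> nat) \<Rightarrow> (nat \<Rightarrow> bool) \<Rightarrow> nat \<Rightarrow> nat \<times> (nat \<Rightarrow> real list)" where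
  "run move N n p ori ident d 0 = (0, \<lambda>i. [])"
| "run move N n p ori ident d (Suc t) =
    (let (R, h) = run move N n p ori ident d t;
         cw = (\<lambda>i. move N (ident i) (d i) (h i) = ori i);
         r = rot_index n cw;
         obs = (\<lambda>i. let k = (i + R) mod n; k' = (i + R + r) mod n in
                      if ori i then cwd (p k) (p k') else cwd (p k') (p k))
     in ((R + r) mod n, \<lambda>i. h i @ [obs i]))"

definition leader_elected ::
  "(nat \<Rightarrow> nat \<Rightarrow> bool \<Rightarrow> real list \<Rightarrow> bool) \<Rightarrow> (nat \<Rightarrow> nat \<Rightarrow> bool \<Rightarrow> real list \<Rightarrow> bool)
     \<Rightarrow> nat \<Rightarrow> nat \<Rightarrow> (nat \<Rightarrow> real) \<Rightarrow> (nat \<Rightarrow> bool) \<Rightarrow> (nat \<Rightarrow> nat) \<Rightarrow> (nat \<Rightarrow> bool) \<Rightarrow> nat \<Rightarrow> bool" where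
  "leader_elected move decide N n p ori ident d t \<longleftrightarrow>
     card {i. i < n \<and> decide N (ident i) (d i) (snd (run move N n p ori ident d t) i)} = 1"

end

theory Submission
  imports Defs "HOL-Library.Discrete_Functions"
begin

text \<open>Phase b of the election takes two rounds. In the first, the remaining candidates whose
  ID has bit b set reverse their given direction; in the second, every agent reverses it.
  Writing s i = \<plusminus>1 for the objective sense of agent i's given direction, the net rotation
  of the phase is -2 times the sum of s over the set F of reversing candidates. Every agent
  sees whether it is back at its starting point, i.e. whether n divides twice that sum, so all
  agents learn the same bit. The candidates keep F if that bit is 1 and drop F otherwise.
  The nontrivial move says that n does not divide twice the sum of all s i, and this
  invariant passes from the candidates to the survivors. Hence after one phase per bit of N
  the candidate set is nonempty, and since its members agree on every bit of their IDs, it is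
  a singleton.\<close>

lemma run_fst_Suc:
  "fst (run move N n p ori ident d (Suc t)) =
    (fst (run move N n p ori ident d t) +
     rot_index n (\<lambda>i. move N (ident i) (d i) (snd (run move N n p ori ident d t) i) = ori i)) mod n"
  by (simp add: Let_def split: prod.split)

lemma run_snd_Suc:
  "snd (run move N n p ori ident d (Suc t)) i =
    snd (run move N n p ori ident d t) i @
    [let R = fst (run move N n p ori ident d t);
         r = rot_index n (\<lambda>i. move N (ident i) (d i) (snd (run move N n p ori ident d t) i) = ori i);
         k = (i + R) mod n; k' = (i + R + r) mod n in
       if ori i then cwd (p k) (p k') else cwd (p k') (p k)]"
  by (simp add: Let_def split: prod.split)

declare run.simps(2)[simp del]

lemma length_run_history: "length (snd (run move N n p ori ident d t) i) = t"
  by (induction t) (simp_all add: run_snd_Suc)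

lemma run_history_nth_stable:
  assumes "j < t" "t \<le> t'"
  shows "snd (run move N n p ori ident d t') i ! j = snd (run move N n p ori ident d t) i ! j"
  using assms(2)
proof (induction t' rule: dec_induct)
  case (step t')
  then show ?case using assms(1) by (simp add: run_snd_Suc nth_append length_run_history)
qed simp

lemma rot_index_eq_signed_sum:
  "rot_index n cw = nat ((\<Sum>i<n. if cw i then 1 else -1 :: int) mod int n)"
proof -
  have "(\<Sum>i<n. if cw i then 1 else -1 :: int) =
        (\<Sum>i\<in>{..<n} \<inter> {i. cw i}. 1) + (\<Sum>i\<in>{..<n} \<inter> - {i. cw i}. -1)"
    by (rule sum.If_cases) auto
  also have "{..<n} \<inter> {i. cw i} = {i. i < n \<and> cw i}" by auto
  also have "{..<n} \<inter> - {i. cw i} = {i. i < n \<and> \<not> cw i}" by auto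
  finally show ?thesis by (simp add: rot_index_def)
qed

lemma nontrivial_imp_not_dvd_double_signed_sum:
  assumes "0 < n" and "nontrivial n cw"
  shows "\<not> int n dvd 2 * (\<Sum>i<n. if cw i then 1 else -1 :: int)"
proof
  define m where "m = (\<Sum>i<n. if cw i then 1 else -1 :: int) mod int n"
  assume "int n dvd 2 * (\<Sum>i<n. if cw i then 1 else -1 :: int)"
  then have "int n dvd 2 * m"
    unfolding m_def by (metis dvd_eq_mod_eq_0 mod_mult_right_eq)
  then obtain q where q: "2 * m = int n * q" ..
  have m_range: "0 \<le> m" "m < int n" using \<open>0 < n\<close> by (auto simp: m_def)
  then have "0 \<le> int n * q" "int n * q < int n * 2" using q by linarith+
  then have "0 \<le> q" "q < 2" using \<open>0 < n\<close> by (auto simp: zero_le_mult_iff)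
  then have "q = 0 \<or> q = 1" by auto
  moreover have "m \<noteq> 0" "2 * m \<noteq> int n"
    using assms(2) m_range unfolding nontrivial_def rot_index_eq_signed_sum m_def[symmetric] by auto
  ultimately show False using q by auto
qed

lemma frac_diff_eq_0_iff:
  fixes a b :: real
  assumes "0 \<le> a" "a < 1" "0 \<le> b" "b < 1"
  shows "frac (a - b) = 0 \<longleftrightarrow> a = b"
proof
  assume "frac (a - b) = 0"
  then obtain k where k: "a - b = of_int k" by (auto elim: Ints_cases)
  with assms have "- 1 < k" "k < 1" by linarith+
  then have "k = 0" by simp
  then show "a = b" using k by simp
qed simp

lemma nat_mod_add_nat_mod_eq_0_iff:
  assumes "0 < n"
  shows "(nat (x mod int n) + nat (y mod int n)) mod n = 0 \<longleftrightarrow> int n dvd x + y"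
proof -
  have "int ((nat (x mod int n) + nat (y mod int n)) mod n) = (x + y) mod int n"
    using assms by (simp add: of_nat_mod mod_add_eq)
  then show ?thesis by (metis dvd_eq_mod_eq_0 of_nat_eq_0_iff)
qed

locale circle_run =
  fixes move :: "nat \<Rightarrow> nat \<Rightarrow> bool \<Rightarrow> real list \<Rightarrow> bool"
    and N n :: nat and p :: "nat \<Rightarrow> real" and ori :: "nat \<Rightarrow> bool"
    and ident :: "nat \<Rightarrow> nat" and d :: "nat \<Rightarrow> bool"
  assumes n_pos: "0 < n"
    and p_mono: "strict_mono_on {..<n} p"
    and p_range: "\<forall>i<n. 0 \<le> p i \<and> p i < 1"
begin

abbreviation hist :: "nat \<Rightarrow> nat \<Rightarrow> real list" where
  "hist t \<equiv> snd (run move N n p ori ident d t)"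

abbreviation rot :: "nat \<Rightarrow> nat" where
  "rot t \<equiv> rot_index n (\<lambda>i. move N (ident i) (d i) (hist t i) = ori i)"

text \<open>Modulo 1 the two observations add up to the displacement over rounds t and t + 1; as
  the positions are distinct points of [0,1), it vanishes iff the two rotations cancel.\<close>
lemma returned_after_two_rounds_iff:
  "frac (hist (Suc (Suc t)) i ! t + hist (Suc (Suc t)) i ! Suc t) = 0 \<longleftrightarrow>
   (rot t + rot (Suc t)) mod n = 0"
proof -
  define R where "R = fst (run move N n p ori ident d t)"
  define k0 where "k0 = (i + R) mod n"
  define k1 where "k1 = (i + R + rot t) mod n"
  define k2 where "k2 = (i + R + rot t + rot (Suc t)) mod n"
  have first: "hist (Suc (Suc t)) i ! t = (if ori i then cwd (p k0) (p k1) else cwd (p k1) (p k0))"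
    using run_history_nth_stable[of t "Suc t" "Suc (Suc t)"]
    by (simp add: run_snd_Suc length_run_history nth_append k0_def k1_def R_def Let_def)
  have "(i + (R + rot t) mod n) mod n = k1"
    unfolding k1_def by (simp add: mod_add_right_eq add.assoc)
  moreover have "(i + (R + rot t) mod n + rot (Suc t)) mod n = k2"
    unfolding k2_def using mod_add_left_eq[of "R + rot t" n "i + rot (Suc t)"] by (simp add: ac_simps)
  ultimately have second:
    "hist (Suc (Suc t)) i ! Suc t = (if ori i then cwd (p k1) (p k2) else cwd (p k2) (p k1))"
    by (simp add: run_snd_Suc[of _ _ _ _ _ _ _ "Suc t"] run_fst_Suc length_run_history
        nth_append R_def Let_def)
  have "k0 < n" "k2 < n" using n_pos by (auto simp: k0_def k2_def)
  then have k0: "0 \<le> p k0" "p k0 < 1" and k2: "0 \<le> p k2" "p k2 < 1" using p_range by auto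
  have "frac (hist (Suc (Suc t)) i ! t + hist (Suc (Suc t)) i ! Suc t) =
        (if ori i then frac (p k2 - p k0) else frac (p k0 - p k2))"
    by (simp add: first second cwd_def)
  then have "frac (hist (Suc (Suc t)) i ! t + hist (Suc (Suc t)) i ! Suc t) = 0 \<longleftrightarrow> p k2 = p k0"
    using frac_diff_eq_0_iff[OF k2 k0] frac_diff_eq_0_iff[OF k0 k2]
    by (simp add: eq_commute[of "p k0"])
  also have "\<dots> \<longleftrightarrow> k2 = k0"
    using strict_mono_on_imp_inj_on[OF p_mono] \<open>k0 < n\<close> \<open>k2 < n\<close> by (auto dest: inj_onD)
  also have "\<dots> \<longleftrightarrow> (rot t + rot (Suc t)) mod n = 0"
    unfolding k0_def k2_def using mod_eq_dvd_iff_nat[of "i + R" "i + R + (rot t + rot (Suc t))" n]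
    by (simp add: add.assoc dvd_eq_mod_eq_0)
  finally show ?thesis .
qed

end

definition phase_moved :: "real list \<Rightarrow> nat \<Rightarrow> bool" where
  "phase_moved h j \<longleftrightarrow> frac (h ! (2 * j) + h ! (2 * j + 1)) \<noteq> 0"

definition candidate :: "nat \<Rightarrow> real list \<Rightarrow> nat \<Rightarrow> bool" where
  "candidate x h b \<longleftrightarrow> (\<forall>j<b. bit x j = phase_moved h j)"

definition elect_move :: "nat \<Rightarrow> nat \<Rightarrow> bool \<Rightarrow> real list \<Rightarrow> bool" where
  "elect_move N x dir h =
     (if odd (length h) \<or> candidate x h (length h div 2) \<and> bit x (length h div 2)
      then \<not> dir else dir)"

definition elect_decide :: "nat \<Rightarrow> nat \<Rightarrow> bool \<Rightarrow> real list \<Rightarrow> bool" where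
  "elect_decide N x dir h \<longleftrightarrow> candidate x h (Suc (floor_log N))"

definition elect_rounds :: "nat \<Rightarrow> nat" where
  "elect_rounds N = 2 * Suc (floor_log N)"

lemma elect_rounds_le_log:
  assumes "2 \<le> N"
  shows "real (elect_rounds N) \<le> (4 / ln 2) * ln (real N)"
proof -
  have "1 \<le> log 2 (real N)" using assms by simp
  moreover have "real (floor_log N) \<le> log 2 (real N)"
    using assms by (simp add: floor_log_altdef)
  ultimately have "real (elect_rounds N) \<le> 4 * log 2 (real N)" by (simp add: elect_rounds_def)
  then show ?thesis by (simp add: log_def)
qed

lemma eq_if_bits_agree_below:
  fixes x y :: nat
  assumes "x < 2 ^ b" "y < 2 ^ b" "\<forall>j<b. bit x j = bit y j"
  shows "x = y"
proof (rule bit_eqI)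
  fix j
  have "take_bit b x = x" "take_bit b y = y" using assms by (simp_all add: take_bit_nat_eq_self_iff)
  then have "bit x j \<longleftrightarrow> j < b \<and> bit x j" "bit y j \<longleftrightarrow> j < b \<and> bit y j"
    by (metis bit_take_bit_iff)+
  then show "bit x j = bit y j" using assms(3) by blast
qed

locale election_run = circle_run elect_move N n p ori ident d
  for N n :: nat and p :: "nat \<Rightarrow> real" and ori :: "nat \<Rightarrow> bool"
    and ident :: "nat \<Rightarrow> nat" and d :: "nat \<Rightarrow> bool"
begin

definition sign :: "nat \<Rightarrow> int" where
  "sign i = (if d i = ori i then 1 else -1)"

definition candidates :: "nat \<Rightarrow> nat set" where
  "candidates b = {i. i < n \<and> candidate (ident i) (hist (2 * b) i) b}"

definition reversing :: "nat \<Rightarrow> nat set" where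
  "reversing b = {i \<in> candidates b. bit (ident i) b}"

lemma phase_moved_stable:
  assumes "j < b" "b \<le> c"
  shows "phase_moved (hist (2 * c) i) j = phase_moved (hist (2 * b) i) j"
  unfolding phase_moved_def using assms
  by (simp add: run_history_nth_stable[of "2 * j" "2 * b" "2 * c"]
      run_history_nth_stable[of "Suc (2 * j)" "2 * b" "2 * c"])

lemma phase_net_rotation:
  "(\<Sum>i<n. if elect_move N (ident i) (d i) (hist (2 * b) i) = ori i then 1 else -1 :: int) +
   (\<Sum>i<n. if elect_move N (ident i) (d i) (hist (Suc (2 * b)) i) = ori i then 1 else -1) =
   - (2 * sum sign (reversing b))"
proof -
  have "(\<Sum>i<n. if elect_move N (ident i) (d i) (hist (2 * b) i) = ori i then 1 else -1 :: int) +
        (\<Sum>i<n. if elect_move N (ident i) (d i) (hist (Suc (2 * b)) i) = ori i then 1 else -1) =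
        (\<Sum>i<n. if i \<in> reversing b then - 2 * sign i else 0)"
    unfolding sum.distrib[symmetric]
    by (rule sum.cong) (auto simp: elect_move_def length_run_history sign_def reversing_def
        candidates_def)
  also have "\<dots> = (\<Sum>i\<in>reversing b. - 2 * sign i)"
    by (simp add: sum.If_cases reversing_def candidates_def lessThan_def Collect_conj_eq Int_commute)
  finally show ?thesis by (simp add: sum_distrib_left sum_negf)
qed

lemma phase_moved_iff:
  "phase_moved (hist (2 * Suc b) i) b \<longleftrightarrow> \<not> int n dvd 2 * sum sign (reversing b)"
proof -
  have "phase_moved (hist (2 * Suc b) i) b \<longleftrightarrow> (rot (2 * b) + rot (Suc (2 * b))) mod n \<noteq> 0"
    using returned_after_two_rounds_iff[of "2 * b" i] by (simp add: phase_moved_def)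
  also have "\<dots> \<longleftrightarrow> \<not> int n dvd 2 * sum sign (reversing b)"
    unfolding rot_index_eq_signed_sum nat_mod_add_nat_mod_eq_0_iff[OF n_pos] phase_net_rotation
    by simp
  finally show ?thesis .
qed

lemma candidates_Suc:
  "candidates (Suc b) =
     (if int n dvd 2 * sum sign (reversing b) then candidates b - reversing b else reversing b)"
proof -
  have "candidate (ident i) (hist (2 * Suc b) i) (Suc b) \<longleftrightarrow>
        candidate (ident i) (hist (2 * b) i) b \<and>
        bit (ident i) b = (\<not> int n dvd 2 * sum sign (reversing b))" for i
    using phase_moved_iff[of b i] phase_moved_stable[of _ b "Suc b" i]
    by (auto simp: candidate_def less_Suc_eq)
  then show ?thesis by (auto simp: candidates_def reversing_def)
qed

lemma candidates_signed_sum_not_dvd: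
  assumes "\<not> int n dvd 2 * (\<Sum>i<n. sign i)"
  shows "\<not> int n dvd 2 * sum sign (candidates b)"
proof (induction b)
  case 0
  have "candidates 0 = {..<n}" by (auto simp: candidates_def candidate_def)
  then show ?case using assms by simp
next
  case (Suc b)
  have "reversing b \<subseteq> candidates b" by (auto simp: reversing_def)
  then have "sum sign (candidates b) = sum sign (candidates b - reversing b) + sum sign (reversing b)"
    by (simp add: sum_diff candidates_def)
  then have "2 * sum sign (candidates b) =
             2 * sum sign (candidates b - reversing b) + 2 * sum sign (reversing b)"
    by simp
  then show ?case using Suc.IH unfolding candidates_Suc by (auto simp: dvd_add_left_iff)
qed

lemma candidates_subsingleton:
  assumes "inj_on ident {..<n}" "\<forall>i<n. ident i < 2 ^ b"
    and "i \<in> candidates b" "i' \<in> candidates b"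
  shows "i = i'"
proof -
  have "bit (ident i) j = bit (ident i') j" if "j < b" for j
  proof -
    have "phase_moved (hist (2 * b) k) j \<longleftrightarrow> \<not> int n dvd 2 * sum sign (reversing j)" for k
      using phase_moved_stable[of j "Suc j" b k] phase_moved_iff[of j k] \<open>j < b\<close> by simp
    then show ?thesis using assms(3,4) \<open>j < b\<close> by (simp add: candidates_def candidate_def)
  qed
  then have "ident i = ident i'"
    using assms by (intro eq_if_bits_agree_below[of _ b]) (auto simp: candidates_def)
  then show ?thesis using assms by (auto simp: candidates_def dest: inj_onD)
qed

end

theorem lemma7:
  shows "\<exists>(C::real) move decide (T :: nat \<Rightarrow> nat).
    (\<forall>N\<ge>2. real (T N) \<le> C * ln (real N)) \<and>
    (\<forall>N n p ori ident d.
       4 < n \<longrightarrow> n \<le> N \<longrightarrow>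
       strict_mono_on {..<n} p \<longrightarrow> (\<forall>i<n. 0 \<le> p i \<and> p i < 1) \<longrightarrow>
       inj_on ident {..<n} \<longrightarrow> (\<forall>i<n. ident i \<in> {1..N}) \<longrightarrow>
       nontrivial n (\<lambda>i. d i = ori i) \<longrightarrow>
       leader_elected move decide N n p ori ident d (T N))"
proof (intro exI conjI allI impI)
  show "real (elect_rounds N) \<le> (4 / ln 2) * ln (real N)" if "2 \<le> N" for N
    using that by (rule elect_rounds_le_log)
next
  fix N n :: nat and p :: "nat \<Rightarrow> real" and ori d :: "nat \<Rightarrow> bool" and ident :: "nat \<Rightarrow> nat"
  assume "4 < n" "strict_mono_on {..<n} p" "\<forall>i<n. 0 \<le> p i \<and> p i < 1"
    and ident_inj: "inj_on ident {..<n}" and ident_range: "\<forall>i<n. ident i \<in> {1..N}"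
    and nt: "nontrivial n (\<lambda>i. d i = ori i)"
  then interpret election_run N n p ori ident d by unfold_locales auto
  define b where "b = Suc (floor_log N)"
  have "\<not> int n dvd 2 * sum sign (candidates b)"
    using candidates_signed_sum_not_dvd nontrivial_imp_not_dvd_double_signed_sum[OF n_pos nt]
    by (simp add: sign_def)
  then obtain i where i: "i \<in> candidates b" by fastforce
  have "\<forall>i<n. ident i < 2 ^ b"
    using ident_range floor_log_exp2_gt[of N] by (auto simp: b_def intro: le_less_trans)
  then have "candidates b = {i}" using candidates_subsingleton[OF ident_inj] i by blast
  then show "leader_elected elect_move elect_decide N n p ori ident d (elect_rounds N)"
    by (simp add: leader_elected_def elect_decide_def elect_rounds_def candidates_def b_def)
qed

end
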